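(* Let $G$ be a bipartite graph with colour classes of sizes $v$ and $w$, with $e$ edges, in which every vertex has degree at least $2$. Then the number of paths of length $3$ in $G$ is at least $e(e/v-1)(e/w-1)$, and this bound is attained exactly if all vertices of the first class have the same degree and all vertices of the second class have the same degree.
   Context: A path of length $3$ is a sequence of four distinct vertices $(x,y,z,t)$ with $\{x,y\},\{y,z\},\{z,t\}$ edges; a path and its reversal $(t,z,y,x)$ are counted as the same path (so the number of paths of length $3$ equals $\sum_{\{y,z\}\text{ edge}}(d(y)-1)(d(z)-1)$, $d$ denoting degree). *)

theory Defs
  imports Complex_Main
begin

definition simple_graph :: "'a set \<Rightarrow> ('a \<Rightarrow> 'a \<Rightarrow> bool) \<Rightarrow> bool" where
  "simple_graph V adj \<longleftrightarrow> finite V \<and> (\<forall>x y. adj x y \<longrightarrow> x \<in> V \<and> y \<in> V)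
     \<and> (\<forall>x y. adj x y \<longrightarrow> adj y x) \<and> (\<forall>x. \<not> adj x x)"

definition edges :: "'a set \<Rightarrow> ('a \<Rightarrow> 'a \<Rightarrow> bool) \<Rightarrow> 'a set set" where
  "edges V adj = {{x, y} | x y. x \<in> V \<and> y \<in> V \<and> adj x y}"

definition degree :: "'a set \<Rightarrow> ('a \<Rightarrow> 'a \<Rightarrow> bool) \<Rightarrow> 'a \<Rightarrow> nat" where
  "degree V adj x = card {y \<in> V. adj x y}"

definition bipartite_with :: "'a set \<Rightarrow> ('a \<Rightarrow> 'a \<Rightarrow> bool) \<Rightarrow> 'a set \<Rightarrow> 'a set \<Rightarrow> bool" where
  "bipartite_with V adj X Y \<longleftrightarrow> simple_graph V adj \<and> V = X \<union> Y \<and> X \<inter> Y = {}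
     \<and> (\<forall>x y. adj x y \<longrightarrow> (x \<in> X \<and> y \<in> Y) \<or> (x \<in> Y \<and> y \<in> X))"

text \<open>Paths of length 3: sequences (x,y,z,t) of four distinct vertices with consecutive
  vertices adjacent; a path and its reversal are identified, so a path is represented
  by the set containing the sequence and its reversal.\<close>
definition path3_seqs :: "'a set \<Rightarrow> ('a \<Rightarrow> 'a \<Rightarrow> bool) \<Rightarrow> ('a \<times> 'a \<times> 'a \<times> 'a) set" where
  "path3_seqs V adj = {(x, y, z, t). x \<in> V \<and> y \<in> V \<and> z \<in> V \<and> t \<in> V \<and>
      distinct [x, y, z, t] \<and> adj x y \<and> adj y z \<and> adj z t}"

definition paths3 :: "'a set \<Rightarrow> ('a \<Rightarrow> 'a \<Rightarrow> bool) \<Rightarrow> ('a \<times> 'a \<times> 'a \<times> 'a) set set" where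
  "paths3 V adj = (\<lambda>(x, y, z, t). {(x, y, z, t), (t, z, y, x)}) ` path3_seqs V adj"

definition num_paths3 :: "'a set \<Rightarrow> ('a \<Rightarrow> 'a \<Rightarrow> bool) \<Rightarrow> nat" where
  "num_paths3 V adj = card (paths3 V adj)"

end

theory Submission
  imports Defs
begin

(* Count the paths of length 3 by their middle edge {y, z}, y \<in> X: there are
   (d y - 1) (d z - 1) of them.  With the average degrees \<alpha> = e / v and \<beta> = e / w,
   each such term equals
     (\<alpha> - 1)(\<beta> - 1) + \<alpha>(\<beta> - 1)(1 - \<alpha> / d y) + \<beta>(\<alpha> - 1)(1 - \<beta> / d z) + K / (d y d z),
   where K = degree_defect \<alpha> \<beta> (d y) (d z) is nonnegative once all four arguments are
   at least 2, and vanishes only at (d y, d z) = (\<alpha>, \<beta>).  Summed over the e edges, the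
   middle terms cancel because the sum of 1 / d y over the edges is v (and that of
   1 / d z is w), leaving e (\<alpha> - 1)(\<beta> - 1) plus a nonnegative remainder that is zero
   exactly when every edge joins a vertex of degree \<alpha> to one of degree \<beta>. *)

definition degree_defect :: "real \<Rightarrow> real \<Rightarrow> real \<Rightarrow> real \<Rightarrow> real" where
  "degree_defect \<alpha> \<beta> a b = a*b*(a-\<alpha>)*(b-\<beta>) + (\<beta>-1)*b*(a-\<alpha>)^2 + (\<alpha>-1)*a*(b-\<beta>)^2"

lemma degree_defect_swap: "degree_defect \<alpha> \<beta> a b = degree_defect \<beta> \<alpha> b a"
  unfolding degree_defect_def by (simp add: algebra_simps)

lemma binary_quadratic_form_nonneg:
  fixes \<alpha> b p r :: real
  assumes "\<alpha> \<ge> 2" "b \<ge> 2"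
  shows "0 \<le> b*(b-1)*p^2 - \<alpha>*b*p*r + \<alpha>*(\<alpha>-1)*r^2"
proof -
  have "4 \<le> (3*\<alpha>-4)*(3*b-4)" using assms mult_mono[of 2 "3*\<alpha>-4" 2 "3*b-4"] by simp
  then have discr: "0 \<le> 4*b*(b-1)*\<alpha>*(\<alpha>-1) - \<alpha>^2*b^2"
    using assms mult_nonneg_nonneg[of "\<alpha>*b" "4*(b-1)*(\<alpha>-1) - \<alpha>*b"]
    by (simp add: algebra_simps power2_eq_square)
  have "4*b*(b-1)*(b*(b-1)*p^2 - \<alpha>*b*p*r + \<alpha>*(\<alpha>-1)*r^2)
      = (2*b*(b-1)*p - \<alpha>*b*r)^2 + (4*b*(b-1)*\<alpha>*(\<alpha>-1) - \<alpha>^2*b^2)*r^2"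
    by (simp add: algebra_simps power2_eq_square)
  also have "\<dots> \<ge> 0" using discr by simp
  finally have "0 \<le> (4*b*(b-1)) * (b*(b-1)*p^2 - \<alpha>*b*p*r + \<alpha>*(\<alpha>-1)*r^2)" by simp
  moreover have "4*b*(b-1) > 0" using assms by simp
  ultimately show ?thesis by (simp add: zero_le_mult_iff)
qed

(* The negative cross term a b (a - \<alpha>) (b - \<beta>) is absorbed by a positive semidefinite
   quadratic form in (a - \<alpha>, \<beta> - b), leaving (\<alpha> - 1) (a - \<alpha>) (\<beta> - b)^2 > 0. *)
lemma degree_defect_pos_opposite:
  fixes \<alpha> \<beta> a b :: real
  assumes "\<alpha> \<ge> 2" "b \<ge> 2" "a > \<alpha>" "b < \<beta>"
  shows "degree_defect \<alpha> \<beta> a b > 0"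
proof -
  define p r where "p = a - \<alpha>" and "r = \<beta> - b"
  have "degree_defect \<alpha> \<beta> a b = (b*(b-1)*p^2 - \<alpha>*b*p*r + \<alpha>*(\<alpha>-1)*r^2) + (\<alpha>-1)*p*r^2"
    unfolding degree_defect_def p_def r_def by (simp add: algebra_simps power2_eq_square)
  moreover have "(\<alpha>-1)*p*r^2 > 0" using assms unfolding p_def r_def by simp
  ultimately show ?thesis using binary_quadratic_form_nonneg[OF assms(1,2), of p r] by linarith
qed

lemma degree_defect_pos:
  fixes \<alpha> \<beta> a b :: real
  assumes "\<alpha> \<ge> 2" "\<beta> \<ge> 2" "a \<ge> 2" "b \<ge> 2" "(a, b) \<noteq> (\<alpha>, \<beta>)"
  shows "degree_defect \<alpha> \<beta> a b > 0"
proof (cases "(a-\<alpha>)*(b-\<beta>) \<ge> 0")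
  case True
  then have "a*b*(a-\<alpha>)*(b-\<beta>) \<ge> 0" using assms by (simp add: mult.assoc)
  moreover have "(\<beta>-1)*b*(a-\<alpha>)^2 \<ge> 0" "(\<alpha>-1)*a*(b-\<beta>)^2 \<ge> 0" using assms by simp_all
  moreover have "(\<beta>-1)*b*(a-\<alpha>)^2 > 0 \<or> (\<alpha>-1)*a*(b-\<beta>)^2 > 0" using assms by auto
  ultimately show ?thesis unfolding degree_defect_def by linarith
next
  case False
  then consider "a > \<alpha>" "b < \<beta>" | "b > \<beta>" "a < \<alpha>"
    by (auto simp: mult_less_0_iff not_le)
  then show ?thesis
  proof cases
    case 1
    then show ?thesis using assms by (intro degree_defect_pos_opposite) auto
  next
    case 2
    then have "degree_defect \<beta> \<alpha> b a > 0" using assms by (intro degree_defect_pos_opposite) auto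
    then show ?thesis by (subst degree_defect_swap)
  qed
qed

lemma degree_defect_nonneg:
  "\<lbrakk>\<alpha> \<ge> 2; \<beta> \<ge> 2; a \<ge> 2; b \<ge> 2\<rbrakk> \<Longrightarrow> degree_defect \<alpha> \<beta> a b \<ge> 0"
  using degree_defect_pos[of \<alpha> \<beta> a b] by (cases "(a, b) = (\<alpha>, \<beta>)") (auto simp: degree_defect_def)

lemma degree_defect_eq_0_iff:
  assumes "\<alpha> \<ge> 2" "\<beta> \<ge> 2" "a \<ge> 2" "b \<ge> 2"
  shows "degree_defect \<alpha> \<beta> a b = 0 \<longleftrightarrow> a = \<alpha> \<and> b = \<beta>"
proof
  assume "degree_defect \<alpha> \<beta> a b = 0"
  then show "a = \<alpha> \<and> b = \<beta>" using degree_defect_pos[OF assms] by (metis less_irrefl prod.inject)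
qed (simp add: degree_defect_def)

lemma edge_term_decomposition:
  fixes \<alpha> \<beta> a b :: real
  assumes "a \<noteq> 0" "b \<noteq> 0"
  shows "(a-1)*(b-1) = (\<alpha>-1)*(\<beta>-1) + \<alpha>*(\<beta>-1)*(1 - \<alpha>/a) + \<beta>*(\<alpha>-1)*(1 - \<beta>/b)
           + degree_defect \<alpha> \<beta> a b / (a*b)"
  using assms unfolding degree_defect_def by (simp add: field_simps power2_eq_square)

lemma all_eq_mean_iff:
  fixes f :: "'a \<Rightarrow> real"
  assumes "finite A" "A \<noteq> {}"
  shows "(\<forall>x\<in>A. f x = sum f A / card A) \<longleftrightarrow> (\<forall>x\<in>A. \<forall>y\<in>A. f x = f y)"
proof
  assume const: "\<forall>x\<in>A. \<forall>y\<in>A. f x = f y"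
  show "\<forall>x\<in>A. f x = sum f A / card A"
  proof
    fix x assume "x \<in> A"
    then have "sum f A = card A * f x" using const sum_constant[of "f x" A] by (metis sum.cong)
    then show "f x = sum f A / card A" using assms by simp
  qed
qed metis

locale bipartite_graph =
  fixes V :: "'a set" and adj :: "'a \<Rightarrow> 'a \<Rightarrow> bool" and X Y :: "'a set"
  assumes bipartite: "bipartite_with V adj X Y"
begin

lemma finite_V: "finite V"
  and V_eq: "V = X \<union> Y"
  and sides_disjoint: "X \<inter> Y = {}"
  and adj_sym: "adj x y \<Longrightarrow> adj y x"
  and adj_in_V: "adj x y \<Longrightarrow> x \<in> V \<and> y \<in> V"
  and adj_sides: "adj x y \<Longrightarrow> (x \<in> X \<and> y \<in> Y) \<or> (x \<in> Y \<and> y \<in> X)"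
  using bipartite unfolding bipartite_with_def simple_graph_def by blast+

lemma finite_X: "finite X" and finite_Y: "finite Y"
  using finite_V V_eq by auto

lemma adj_X_Y: "adj x y \<Longrightarrow> x \<in> X \<Longrightarrow> y \<in> Y"
  and adj_Y_X: "adj x y \<Longrightarrow> x \<in> Y \<Longrightarrow> y \<in> X"
  using adj_sides sides_disjoint by blast+

definition nbh :: "'a \<Rightarrow> 'a set" where
  "nbh x = {y \<in> V. adj x y}"

definition arcs :: "('a \<times> 'a) set" where
  "arcs = Sigma X nbh"

lemma finite_nbh [simp]: "finite (nbh x)"
  unfolding nbh_def using finite_V by simp

lemma card_nbh: "card (nbh x) = degree V adj x"
  unfolding nbh_def degree_def ..

lemma finite_arcs: "finite arcs"
  unfolding arcs_def using finite_X by simp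

lemma mem_arcs: "(x, y) \<in> arcs \<longleftrightarrow> x \<in> X \<and> y \<in> Y \<and> adj x y"
  unfolding arcs_def nbh_def using adj_X_Y adj_in_V by auto

lemma card_edges: "card (edges V adj) = card arcs"
proof -
  have "edges V adj = (\<lambda>(x, y). {x, y}) ` arcs"
  proof (intro equalityI subsetI)
    fix e assume "e \<in> edges V adj"
    then obtain x y where e: "e = {x, y}" "adj x y" unfolding edges_def by blast
    show "e \<in> (\<lambda>(x, y). {x, y}) ` arcs"
    proof (cases "x \<in> X")
      case True
      then have "(x, y) \<in> arcs" using e adj_X_Y mem_arcs by blast
      then show ?thesis using e by force
    next
      case False
      then have "(y, x) \<in> arcs" using e adj_sides adj_sym mem_arcs by blast
      moreover have "e = {y, x}" using e by blast
      ultimately show ?thesis by force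
    qed
  next
    fix e assume "e \<in> (\<lambda>(x, y). {x, y}) ` arcs"
    then obtain x y where "e = {x, y}" "adj x y" using mem_arcs by auto
    then show "e \<in> edges V adj" unfolding edges_def using adj_in_V by blast
  qed
  moreover have "inj_on (\<lambda>(x, y). {x, y}) arcs"
  proof (rule inj_onI, clarsimp)
    fix x y x' y' assume "(x, y) \<in> arcs" "(x', y') \<in> arcs" "{x, y} = {x', y'}"
    then show "x = x' \<and> y = y'" using mem_arcs sides_disjoint by (auto simp: doubleton_eq_iff)
  qed
  ultimately show ?thesis by (simp add: card_image)
qed

lemma sum_arcs_fst: "(\<Sum>(x, y)\<in>arcs. f x) = (\<Sum>x\<in>X. of_nat (degree V adj x) * f x)"
proof -
  have "(\<Sum>(x, y)\<in>arcs. f x) = (\<Sum>x\<in>X. \<Sum>y\<in>nbh x. f x)"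
    unfolding arcs_def by (rule sum.Sigma[symmetric]) (simp_all add: finite_X)
  then show ?thesis by (simp add: card_nbh)
qed

lemma sum_arcs_snd: "(\<Sum>(x, y)\<in>arcs. f y) = (\<Sum>y\<in>Y. of_nat (degree V adj y) * f y)"
proof -
  have "(\<Sum>(x, y)\<in>arcs. f y) = (\<Sum>(y, x)\<in>Sigma Y nbh. f y)"
    by (rule sum.reindex_bij_witness[where i=prod.swap and j=prod.swap])
      (auto simp: mem_arcs nbh_def dest: adj_sym adj_Y_X adj_in_V)
  also have "\<dots> = (\<Sum>y\<in>Y. \<Sum>x\<in>nbh y. f y)"
    by (rule sum.Sigma[symmetric]) (simp_all add: finite_Y)
  finally show ?thesis by (simp add: card_nbh)
qed

lemma card_arcs_X: "card arcs = (\<Sum>x\<in>X. degree V adj x)"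
  using sum_arcs_fst[of "\<lambda>_. 1::nat"] by simp

lemma card_arcs_Y: "card arcs = (\<Sum>y\<in>Y. degree V adj y)"
  using sum_arcs_snd[of "\<lambda>_. 1::nat"] by simp

lemma path3_seqs_rev: "(x, y, z, t) \<in> path3_seqs V adj \<Longrightarrow> (t, z, y, x) \<in> path3_seqs V adj"
  unfolding path3_seqs_def by (auto dest: adj_sym)

(* Each path of length 3 has exactly one orientation in this set, since its two middle
   vertices lie on different sides. *)
definition centred_path3_seqs :: "('a \<times> 'a \<times> 'a \<times> 'a) set" where
  "centred_path3_seqs = {(x, y, z, t) \<in> path3_seqs V adj. y \<in> X}"

lemma mem_centred_path3_seqs:
  "(x, y, z, t) \<in> centred_path3_seqs \<longleftrightarrow> (y, z) \<in> arcs \<and> x \<in> nbh y - {z} \<and> t \<in> nbh z - {y}"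
proof
  assume "(x, y, z, t) \<in> centred_path3_seqs"
  then show "(y, z) \<in> arcs \<and> x \<in> nbh y - {z} \<and> t \<in> nbh z - {y}"
    unfolding centred_path3_seqs_def path3_seqs_def mem_arcs nbh_def
    by (auto dest: adj_sym adj_X_Y)
next
  assume "(y, z) \<in> arcs \<and> x \<in> nbh y - {z} \<and> t \<in> nbh z - {y}"
  then have "y \<in> X" "z \<in> Y" "x \<in> Y" "t \<in> X" "adj x y" "adj y z" "adj z t"
    "x \<in> V" "t \<in> V" "x \<noteq> z" "t \<noteq> y"
    unfolding mem_arcs nbh_def by (auto dest: adj_sym adj_X_Y adj_Y_X)
  then show "(x, y, z, t) \<in> centred_path3_seqs"
    unfolding centred_path3_seqs_def path3_seqs_def using sides_disjoint adj_in_V by auto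
qed

lemma num_paths3_eq_card_centred: "num_paths3 V adj = card centred_path3_seqs"
proof -
  define h :: "'a \<times> 'a \<times> 'a \<times> 'a \<Rightarrow> ('a \<times> 'a \<times> 'a \<times> 'a) set" where
    "h = (\<lambda>(x, y, z, t). {(x, y, z, t), (t, z, y, x)})"
  have "paths3 V adj = h ` centred_path3_seqs"
  proof (intro equalityI subsetI)
    fix P assume "P \<in> paths3 V adj"
    then obtain x y z t where P: "P = h (x, y, z, t)" and s: "(x, y, z, t) \<in> path3_seqs V adj"
      unfolding paths3_def h_def by auto
    show "P \<in> h ` centred_path3_seqs"
    proof (cases "y \<in> X")
      case True
      then show ?thesis using P s unfolding centred_path3_seqs_def by force
    next
      case False
      then have "z \<in> X" using s adj_sides unfolding path3_seqs_def by auto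
      moreover have "P = h (t, z, y, x)" using P unfolding h_def by auto
      ultimately show ?thesis using path3_seqs_rev[OF s] unfolding centred_path3_seqs_def by force
    qed
  next
    fix P assume "P \<in> h ` centred_path3_seqs"
    then show "P \<in> paths3 V adj" unfolding paths3_def h_def centred_path3_seqs_def by auto
  qed
  moreover have "inj_on h centred_path3_seqs"
  proof (rule inj_onI)
    fix s s' assume "s \<in> centred_path3_seqs" "s' \<in> centred_path3_seqs" "h s = h s'"
    moreover obtain x y z t x' y' z' t' where "s = (x, y, z, t)" "s' = (x', y', z', t')"
      by (cases s, cases s') auto
    moreover have "y \<noteq> z'"
      if "(x, y, z, t) \<in> centred_path3_seqs" "(x', y', z', t') \<in> centred_path3_seqs"
      using that sides_disjoint unfolding mem_centred_path3_seqs mem_arcs by auto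
    ultimately show "s = s'" unfolding h_def by (auto simp: doubleton_eq_iff)
  qed
  ultimately show ?thesis unfolding num_paths3_def by (simp add: card_image)
qed

lemma num_paths3_eq_sum_arcs:
  "num_paths3 V adj = (\<Sum>(y, z)\<in>arcs. (degree V adj y - 1) * (degree V adj z - 1))"
proof -
  define S where "S = (SIGMA (y, z):arcs. (nbh y - {z}) \<times> (nbh z - {y}))"
  have "centred_path3_seqs = (\<lambda>((y, z), (x, t)). (x, y, z, t)) ` S"
  proof (intro equalityI subsetI)
    fix s assume "s \<in> centred_path3_seqs"
    moreover obtain x y z t where "s = (x, y, z, t)" by (cases s)
    ultimately have "((y, z), (x, t)) \<in> S"
      and "s = (\<lambda>((y, z), (x, t)). (x, y, z, t)) ((y, z), (x, t))"
      unfolding S_def by (simp_all add: mem_centred_path3_seqs)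
    then show "s \<in> (\<lambda>((y, z), (x, t)). (x, y, z, t)) ` S" by (rule rev_image_eqI)
  next
    fix s assume "s \<in> (\<lambda>((y, z), (x, t)). (x, y, z, t)) ` S"
    then show "s \<in> centred_path3_seqs" unfolding S_def by (auto simp: mem_centred_path3_seqs)
  qed
  moreover have "inj_on (\<lambda>((y, z), (x, t)). (x, y, z, t)) S"
    by (auto simp: inj_on_def)
  ultimately have "num_paths3 V adj = card S"
    by (simp add: num_paths3_eq_card_centred card_image)
  also have "\<dots> = (\<Sum>(y, z)\<in>arcs. card (nbh y - {z}) * card (nbh z - {y}))"
    unfolding S_def using finite_arcs by (subst card_SigmaI) (auto simp: case_prod_beta)
  also have "\<dots> = (\<Sum>(y, z)\<in>arcs. (degree V adj y - 1) * (degree V adj z - 1))"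
  proof (intro sum.cong refl, clarify)
    fix y z assume "(y, z) \<in> arcs"
    then have "z \<in> nbh y" "y \<in> nbh z" unfolding mem_arcs nbh_def using adj_in_V adj_sym by auto
    then show "card (nbh y - {z}) * card (nbh z - {y})
        = (degree V adj y - 1) * (degree V adj z - 1)"
      by (simp add: card_nbh)
  qed
  finally show ?thesis .
qed

lemma nbh_nonempty:
  assumes "\<forall>x\<in>V. degree V adj x > 0" "x \<in> V"
  shows "nbh x \<noteq> {}"
  using assms card_nbh[of x] by fastforce

lemma X_empty_iff_Y_empty:
  assumes "\<forall>x\<in>V. degree V adj x > 0"
  shows "X = {} \<longleftrightarrow> Y = {}"
proof -
  have "\<forall>x\<in>X. degree V adj x > 0" "\<forall>y\<in>Y. degree V adj y > 0" using assms V_eq by auto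
  then have "X = {} \<longleftrightarrow> (\<forall>x\<in>X. degree V adj x = 0)" by auto
  also have "\<dots> \<longleftrightarrow> card arcs = 0" unfolding card_arcs_X using finite_X by simp
  also have "\<dots> \<longleftrightarrow> (\<forall>y\<in>Y. degree V adj y = 0)" unfolding card_arcs_Y using finite_Y by simp
  also have "\<dots> \<longleftrightarrow> Y = {}" using \<open>\<forall>y\<in>Y. degree V adj y > 0\<close> by auto
  finally show ?thesis .
qed

lemma arcs_cover_X:
  assumes "\<forall>x\<in>V. degree V adj x > 0" "x \<in> X"
  obtains y where "(x, y) \<in> arcs"
  using nbh_nonempty[OF assms(1), of x] assms(2) V_eq unfolding arcs_def by auto

lemma arcs_cover_Y:
  assumes "\<forall>x\<in>V. degree V adj x > 0" "y \<in> Y"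
  obtains x where "(x, y) \<in> arcs"
proof -
  obtain x where "x \<in> nbh y" using nbh_nonempty[OF assms(1), of y] assms(2) V_eq by auto
  then have "(x, y) \<in> arcs" unfolding mem_arcs nbh_def using assms(2) adj_sym adj_Y_X by blast
  then show ?thesis by (rule that)
qed

lemma sum_arcs_mean_div_degree_fst:
  assumes "\<forall>x\<in>V. degree V adj x > 0" "X \<noteq> {}"
  shows "(\<Sum>(x, y)\<in>arcs. (card arcs / card X) / real (degree V adj x)) = card arcs"
proof -
  have "(\<Sum>(x, y)\<in>arcs. (card arcs / card X) / real (degree V adj x))
      = (\<Sum>x\<in>X. real (degree V adj x) * ((card arcs / card X) / real (degree V adj x)))"
    by (rule sum_arcs_fst)
  also have "\<dots> = (\<Sum>x\<in>X. card arcs / card X)" using assms(1) V_eq by (intro sum.cong) auto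
  also have "\<dots> = card arcs" using assms(2) finite_X by simp
  finally show ?thesis .
qed

lemma sum_arcs_mean_div_degree_snd:
  assumes "\<forall>x\<in>V. degree V adj x > 0" "Y \<noteq> {}"
  shows "(\<Sum>(x, y)\<in>arcs. (card arcs / card Y) / real (degree V adj y)) = card arcs"
proof -
  have "(\<Sum>(x, y)\<in>arcs. (card arcs / card Y) / real (degree V adj y))
      = (\<Sum>y\<in>Y. real (degree V adj y) * ((card arcs / card Y) / real (degree V adj y)))"
    by (rule sum_arcs_snd)
  also have "\<dots> = (\<Sum>y\<in>Y. card arcs / card Y)" using assms(1) V_eq by (intro sum.cong) auto
  also have "\<dots> = card arcs" using assms(2) finite_Y by simp
  finally show ?thesis .
qed

lemma num_paths3_decomposition:
  assumes min_degree: "\<forall>x\<in>V. degree V adj x \<ge> 2" and "X \<noteq> {}" "Y \<noteq> {}"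
  defines "d \<equiv> \<lambda>x. real (degree V adj x)" and "e \<equiv> real (card arcs)"
    and "\<alpha> \<equiv> card arcs / card X" and "\<beta> \<equiv> card arcs / card Y"
  shows "real (num_paths3 V adj)
           = e*(\<alpha>-1)*(\<beta>-1) + (\<Sum>(x, y)\<in>arcs. degree_defect \<alpha> \<beta> (d x) (d y) / (d x * d y))"
proof -
  have pos: "\<forall>x\<in>V. degree V adj x > 0" using min_degree by auto
  have degree_ge: "degree V adj x \<ge> 2" "degree V adj y \<ge> 2" if "(x, y) \<in> arcs" for x y
    using that min_degree V_eq unfolding mem_arcs by auto
  then have d_ge: "d x \<ge> 2" "d y \<ge> 2" if "(x, y) \<in> arcs" for x y
    using that unfolding d_def by fastforce+
  have sum_fst: "(\<Sum>(x, y)\<in>arcs. 1 - \<alpha> / d x) = 0"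
    using sum_arcs_mean_div_degree_fst[OF pos \<open>X \<noteq> {}\<close>]
    unfolding \<alpha>_def d_def split_def by (simp add: sum_subtractf)
  have sum_snd: "(\<Sum>(x, y)\<in>arcs. 1 - \<beta> / d y) = 0"
    using sum_arcs_mean_div_degree_snd[OF pos \<open>Y \<noteq> {}\<close>]
    unfolding \<beta>_def d_def split_def by (simp add: sum_subtractf)
  have "real (num_paths3 V adj) = (\<Sum>(x, y)\<in>arcs. (d x - 1) * (d y - 1))"
    unfolding num_paths3_eq_sum_arcs of_nat_sum
  proof (intro sum.cong refl, clarify)
    fix x y assume "(x, y) \<in> arcs"
    then show "real ((degree V adj x - 1) * (degree V adj y - 1)) = (d x - 1) * (d y - 1)"
      using degree_ge[of x y] by (simp add: d_def of_nat_diff)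
  qed
  also have "\<dots> = (\<Sum>(x, y)\<in>arcs. (\<alpha>-1)*(\<beta>-1) + \<alpha>*(\<beta>-1)*(1 - \<alpha>/d x) + \<beta>*(\<alpha>-1)*(1 - \<beta>/d y)
                    + degree_defect \<alpha> \<beta> (d x) (d y) / (d x * d y))"
  proof (intro sum.cong refl, clarify)
    fix x y assume "(x, y) \<in> arcs"
    then show "(d x - 1) * (d y - 1) = (\<alpha>-1)*(\<beta>-1) + \<alpha>*(\<beta>-1)*(1 - \<alpha>/d x) + \<beta>*(\<alpha>-1)*(1 - \<beta>/d y)
                    + degree_defect \<alpha> \<beta> (d x) (d y) / (d x * d y)"
      using d_ge[of x y] by (intro edge_term_decomposition) auto
  qed
  also have "\<dots> = e*((\<alpha>-1)*(\<beta>-1)) + \<alpha>*(\<beta>-1) * (\<Sum>(x, y)\<in>arcs. 1 - \<alpha> / d x)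
                   + \<beta>*(\<alpha>-1) * (\<Sum>(x, y)\<in>arcs. 1 - \<beta> / d y)
                   + (\<Sum>(x, y)\<in>arcs. degree_defect \<alpha> \<beta> (d x) (d y) / (d x * d y))"
    unfolding e_def split_def by (simp only: sum.distrib sum_distrib_left sum_constant)
  finally show ?thesis unfolding sum_fst sum_snd by simp
qed

lemma ball_arcs_iff:
  assumes "\<forall>x\<in>V. degree V adj x > 0"
  shows "(\<forall>(x, y)\<in>arcs. P x \<and> Q y) \<longleftrightarrow> (\<forall>x\<in>X. P x) \<and> (\<forall>y\<in>Y. Q y)"
proof
  assume h: "\<forall>(x, y)\<in>arcs. P x \<and> Q y"
  have "P x" if x: "x \<in> X" for x
  proof -
    obtain y where "(x, y) \<in> arcs" using arcs_cover_X[OF assms x] .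
    then show ?thesis using h by auto
  qed
  moreover have "Q y" if y: "y \<in> Y" for y
  proof -
    obtain x where "(x, y) \<in> arcs" using arcs_cover_Y[OF assms y] .
    then show ?thesis using h by auto
  qed
  ultimately show "(\<forall>x\<in>X. P x) \<and> (\<forall>y\<in>Y. Q y)" by blast
qed (auto simp: mem_arcs)

lemma card_arcs_ge:
  assumes "\<forall>x\<in>V. degree V adj x \<ge> k"
  shows "card X * k \<le> card arcs" and "card Y * k \<le> card arcs"
proof -
  have "card X * k \<le> sum (degree V adj) X" "card Y * k \<le> sum (degree V adj) Y"
    using sum_bounded_below[of X k "degree V adj"] sum_bounded_below[of Y k "degree V adj"]
      assms V_eq by auto
  then show "card X * k \<le> card arcs" "card Y * k \<le> card arcs"
    using card_arcs_X card_arcs_Y by linarith+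
qed

lemma degree_eq_mean_iff_regular_X:
  assumes "X \<noteq> {}"
  shows "(\<forall>x\<in>X. real (degree V adj x) = card arcs / card X)
           \<longleftrightarrow> (\<forall>x\<in>X. \<forall>x'\<in>X. degree V adj x = degree V adj x')"
  using all_eq_mean_iff[OF finite_X assms, of "\<lambda>x. real (degree V adj x)"]
  unfolding card_arcs_X of_nat_sum by simp

lemma degree_eq_mean_iff_regular_Y:
  assumes "Y \<noteq> {}"
  shows "(\<forall>y\<in>Y. real (degree V adj y) = card arcs / card Y)
           \<longleftrightarrow> (\<forall>y\<in>Y. \<forall>y'\<in>Y. degree V adj y = degree V adj y')"
  using all_eq_mean_iff[OF finite_Y assms, of "\<lambda>y. real (degree V adj y)"]
  unfolding card_arcs_Y of_nat_sum by simp

lemma defect_sum_nonneg_eq_0_iff: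
  assumes min_degree: "\<forall>x\<in>V. degree V adj x \<ge> 2" and "X \<noteq> {}" "Y \<noteq> {}"
  defines "d \<equiv> \<lambda>x. real (degree V adj x)"
    and "\<alpha> \<equiv> card arcs / card X" and "\<beta> \<equiv> card arcs / card Y"
  shows "0 \<le> (\<Sum>(x, y)\<in>arcs. degree_defect \<alpha> \<beta> (d x) (d y) / (d x * d y))"
    and "(\<Sum>(x, y)\<in>arcs. degree_defect \<alpha> \<beta> (d x) (d y) / (d x * d y)) = 0 \<longleftrightarrow>
           (\<forall>x\<in>X. \<forall>x'\<in>X. degree V adj x = degree V adj x') \<and>
           (\<forall>y\<in>Y. \<forall>y'\<in>Y. degree V adj y = degree V adj y')"
proof -
  define defect where "defect = (\<lambda>(x, y). degree_defect \<alpha> \<beta> (d x) (d y) / (d x * d y))"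
  have pos: "\<forall>x\<in>V. degree V adj x > 0" using min_degree by auto
  have "2 * real (card X) \<le> card arcs" "2 * real (card Y) \<le> card arcs"
    using card_arcs_ge[OF min_degree] by simp_all
  moreover have "real (card X) > 0" "real (card Y) > 0"
    using assms(2,3) finite_X finite_Y by (simp_all add: card_gt_0_iff)
  ultimately have "\<alpha> \<ge> 2" "\<beta> \<ge> 2" unfolding \<alpha>_def \<beta>_def by (simp_all add: pos_le_divide_eq)
  have defect_nonneg_iff: "defect (x, y) \<ge> 0 \<and> (defect (x, y) = 0 \<longleftrightarrow> d x = \<alpha> \<and> d y = \<beta>)"
    if "(x, y) \<in> arcs" for x y
  proof -
    have "x \<in> V" "y \<in> V" using that V_eq unfolding mem_arcs by auto
    then have "d x \<ge> 2" "d y \<ge> 2" using min_degree unfolding d_def by auto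
    then show ?thesis
      using \<open>\<alpha> \<ge> 2\<close> \<open>\<beta> \<ge> 2\<close> degree_defect_nonneg degree_defect_eq_0_iff
      unfolding defect_def by simp
  qed
  then show "0 \<le> sum defect arcs" by (intro sum_nonneg) auto
  have "sum defect arcs = 0 \<longleftrightarrow> (\<forall>p\<in>arcs. defect p = 0)"
    using defect_nonneg_iff by (intro sum_nonneg_eq_0_iff[OF finite_arcs]) auto
  also have "\<dots> \<longleftrightarrow> (\<forall>(x, y)\<in>arcs. d x = \<alpha> \<and> d y = \<beta>)"
    using defect_nonneg_iff by auto
  also have "\<dots> \<longleftrightarrow> (\<forall>x\<in>X. d x = \<alpha>) \<and> (\<forall>y\<in>Y. d y = \<beta>)"
    by (rule ball_arcs_iff[OF pos])
  also have "\<dots> \<longleftrightarrow> (\<forall>x\<in>X. \<forall>x'\<in>X. degree V adj x = degree V adj x') \<and>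
                      (\<forall>y\<in>Y. \<forall>y'\<in>Y. degree V adj y = degree V adj y')"
    using degree_eq_mean_iff_regular_X[OF assms(2)] degree_eq_mean_iff_regular_Y[OF assms(3)]
    unfolding d_def \<alpha>_def \<beta>_def by simp
  finally show "sum defect arcs = 0 \<longleftrightarrow> \<dots>" .
qed

theorem num_paths3_ge:
  assumes min_degree: "\<forall>x\<in>V. degree V adj x \<ge> 2"
  defines "e \<equiv> real (card (edges V adj))" and "v \<equiv> real (card X)" and "w \<equiv> real (card Y)"
  shows "real (num_paths3 V adj) \<ge> e * (e / v - 1) * (e / w - 1) \<and>
         (real (num_paths3 V adj) = e * (e / v - 1) * (e / w - 1) \<longleftrightarrow>
           (\<forall>x\<in>X. \<forall>x'\<in>X. degree V adj x = degree V adj x') \<and>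
           (\<forall>y\<in>Y. \<forall>y'\<in>Y. degree V adj y = degree V adj y'))"
proof -
  have pos: "\<forall>x\<in>V. degree V adj x > 0" using min_degree by auto
  show ?thesis
  proof (cases "X = {}")
    case True
    \<comment> \<open>then e = v = w = 0 and both sides are 0, since e / 0 = 0\<close>
    then have "Y = {}" "arcs = {}" using X_empty_iff_Y_empty[OF pos] unfolding arcs_def by auto
    then show ?thesis using True unfolding e_def card_edges num_paths3_eq_sum_arcs by simp
  next
    case False
    then have "Y \<noteq> {}" using X_empty_iff_Y_empty[OF pos] by auto
    show ?thesis
      using num_paths3_decomposition[OF min_degree False \<open>Y \<noteq> {}\<close>]
        defect_sum_nonneg_eq_0_iff[OF min_degree False \<open>Y \<noteq> {}\<close>]
      unfolding e_def v_def w_def card_edges by simp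
  qed
qed

end

theorem corollary4p6:
  fixes V X Y :: "'a set" and adj :: "'a \<Rightarrow> 'a \<Rightarrow> bool"
  assumes "bipartite_with V adj X Y"
    and "\<forall>x\<in>V. degree V adj x \<ge> 2"
  defines "e \<equiv> real (card (edges V adj))"
    and "v \<equiv> real (card X)"
    and "w \<equiv> real (card Y)"
  shows "real (num_paths3 V adj) \<ge> e * (e / v - 1) * (e / w - 1) \<and>
         (real (num_paths3 V adj) = e * (e / v - 1) * (e / w - 1) \<longleftrightarrow>
           (\<forall>x\<in>X. \<forall>x'\<in>X. degree V adj x = degree V adj x') \<and>
           (\<forall>y\<in>Y. \<forall>y'\<in>Y. degree V adj y = degree V adj y'))"
proof -
  interpret bipartite_graph V adj X Y by (rule bipartite_graph.intro) fact
  show ?thesis unfolding e_def v_def w_def by (rule num_paths3_ge) fact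
qed

end
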